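(* Let $R$ be a (unital, not necessarily associative) ring and let $\sigma\colon R\to R$ be an additive bijection with $\sigma(1)=1$. If $R$ is left Noetherian, then the non-associative skew Laurent polynomial ring $R[X^{\pm};\sigma]$ is left Noetherian. Likewise, if $R$ is right Noetherian, then $R[X^{\pm};\sigma]$ is right Noetherian.
   Context: All rings are unital but not necessarily associative. A left (right) ideal of a non-associative ring $S$ is an additive subgroup $I$ with $sI\subseteq I$ ($Is\subseteq I$) for all $s\in S$. $S$ is left (right) Noetherian if it satisfies the ascending chain condition on left (right) ideals. For a non-associative ring $R$ and an additive bijection $\sigma\colon R\to R$ with $\sigma(1)=1$, the non-associative skew Laurent polynomial ring $R[X^{\pm};\sigma]$ is the additive group of formal sums $\sum_{i\in\mathbb{Z}} r_iX^i$ with $r_i\in R$, all but finitely many zero, with pointwise addition and multiplication given by the biadditive extension of $(rX^m)(sX^n)=(r\sigma^m(s))X^{m+n}$ for $r,s\in R$, $m,n\in\mathbb{Z}$ (here $\sigma^m$ for $m<0$ denotes a power of $\sigma^{-1}$). *)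

theory Defs
  imports "HOL-Library.Function_Algebras"
begin

definition nonassoc_ring :: "'a::ab_group_add set \<Rightarrow> ('a \<Rightarrow> 'a \<Rightarrow> 'a) \<Rightarrow> 'a \<Rightarrow> bool" where
  "nonassoc_ring S mul e \<longleftrightarrow>
     0 \<in> S \<and> e \<in> S \<and>
     (\<forall>x\<in>S. \<forall>y\<in>S. x + y \<in> S \<and> - x \<in> S \<and> mul x y \<in> S) \<and>
     (\<forall>x\<in>S. \<forall>y\<in>S. \<forall>z\<in>S. mul (x + y) z = mul x z + mul y z \<and> mul x (y + z) = mul x y + mul x z) \<and>
     (\<forall>x\<in>S. mul e x = x \<and> mul x e = x)"

definition additive_subgroup :: "'a::ab_group_add set \<Rightarrow> bool" where
  "additive_subgroup I \<longleftrightarrow> 0 \<in> I \<and> (\<forall>x\<in>I. \<forall>y\<in>I. x + y \<in> I \<and> - x \<in> I)"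

definition left_ideal :: "'a::ab_group_add set \<Rightarrow> ('a \<Rightarrow> 'a \<Rightarrow> 'a) \<Rightarrow> 'a set \<Rightarrow> bool" where
  "left_ideal S mul I \<longleftrightarrow> I \<subseteq> S \<and> additive_subgroup I \<and> (\<forall>s\<in>S. \<forall>x\<in>I. mul s x \<in> I)"

definition right_ideal :: "'a::ab_group_add set \<Rightarrow> ('a \<Rightarrow> 'a \<Rightarrow> 'a) \<Rightarrow> 'a set \<Rightarrow> bool" where
  "right_ideal S mul I \<longleftrightarrow> I \<subseteq> S \<and> additive_subgroup I \<and> (\<forall>s\<in>S. \<forall>x\<in>I. mul x s \<in> I)"

definition left_noetherian :: "'a::ab_group_add set \<Rightarrow> ('a \<Rightarrow> 'a \<Rightarrow> 'a) \<Rightarrow> bool" where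
  "left_noetherian S mul \<longleftrightarrow>
     (\<forall>I :: nat \<Rightarrow> 'a set. (\<forall>n. left_ideal S mul (I n)) \<and> (\<forall>n. I n \<subseteq> I (Suc n))
        \<longrightarrow> (\<exists>N. \<forall>n\<ge>N. I n = I N))"

definition right_noetherian :: "'a::ab_group_add set \<Rightarrow> ('a \<Rightarrow> 'a \<Rightarrow> 'a) \<Rightarrow> bool" where
  "right_noetherian S mul \<longleftrightarrow>
     (\<forall>I :: nat \<Rightarrow> 'a set. (\<forall>n. right_ideal S mul (I n)) \<and> (\<forall>n. I n \<subseteq> I (Suc n))
        \<longrightarrow> (\<exists>N. \<forall>n\<ge>N. I n = I N))"

definition spow :: "('a \<Rightarrow> 'a) \<Rightarrow> int \<Rightarrow> 'a \<Rightarrow> 'a" where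
  "spow \<sigma> m = (if 0 \<le> m then \<sigma> ^^ nat m else (inv \<sigma>) ^^ nat (- m))"

text \<open>Skew Laurent polynomials: finitely supported coefficient functions int \<Rightarrow> R;
  the sum  \<Sum> r_i X^i  is represented by  i \<mapsto> r_i.\<close>
definition laurent_carrier :: "(int \<Rightarrow> 'a::zero) set" where
  "laurent_carrier = {f. finite {i. f i \<noteq> 0}}"

text \<open>Biadditive extension of (r X^m)(s X^n) = (r sigma^m(s)) X^(m+n):
  coefficient of X^k in f g is  \<Sum>_{m+n=k} f_m sigma^m(g_n).\<close>
definition laurent_mult :: "('a::ab_group_add \<Rightarrow> 'a \<Rightarrow> 'a) \<Rightarrow> ('a \<Rightarrow> 'a)
    \<Rightarrow> (int \<Rightarrow> 'a) \<Rightarrow> (int \<Rightarrow> 'a) \<Rightarrow> (int \<Rightarrow> 'a)" where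
  "laurent_mult mul \<sigma> f g = (\<lambda>k. \<Sum>m\<in>{m. f m \<noteq> 0}. mul (f m) (spow \<sigma> m (g (k - m))))"

end

theory Submission
  imports Defs "HOL-Library.Infinite_Set"
begin

text \<open>For an ideal K of R[X^\<plusminus>;\<sigma>] and n \<in> \<nat>, the coefficients of X^0 of the elements of K
  supported in degrees 0..n form an ideal of R, monotone in K and n. Multiplication by the
  units X^k (a \<sigma>^k-twisted shift on the left, a plain shift on the right) leaves K invariant,
  so K is recovered from these ideals: an element of a larger ideal K' with the same
  coefficient ideals is shifted into degrees 0..n and then reduced one degree at a time.
  A diagonal argument on the doubly indexed chain of coefficient ideals therefore transfers
  the ascending chain condition from R to R[X^\<plusminus>;\<sigma>].\<close>

definition ascending_chain_condition :: "('b set \<Rightarrow> bool) \<Rightarrow> bool" where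
  "ascending_chain_condition P \<longleftrightarrow>
     (\<forall>C :: nat \<Rightarrow> 'b set. (\<forall>n. P (C n)) \<and> (\<forall>n. C n \<subseteq> C (Suc n)) \<longrightarrow> (\<exists>N. \<forall>n\<ge>N. C n = C N))"

lemma left_noetherian_iff_acc: "left_noetherian S mul \<longleftrightarrow> ascending_chain_condition (left_ideal S mul)"
  by (simp add: left_noetherian_def ascending_chain_condition_def)

lemma right_noetherian_iff_acc: "right_noetherian S mul \<longleftrightarrow> ascending_chain_condition (right_ideal S mul)"
  by (simp add: right_noetherian_def ascending_chain_condition_def)

lemma ascending_chain_conditionD:
  assumes "ascending_chain_condition P" "\<And>n. P (C n)" "\<And>n. C n \<subseteq> C (Suc n)"
  obtains N where "\<And>n. N \<le> n \<Longrightarrow> C n = C N"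
  using assms unfolding ascending_chain_condition_def by blast

lemma ascending_chain_condition_doubly_indexed:
  fixes A :: "nat \<Rightarrow> nat \<Rightarrow> 'a set"
  assumes acc: "ascending_chain_condition P" and P: "\<And>m n. P (A m n)"
    and mono: "\<And>m m' n n'. m \<le> m' \<Longrightarrow> n \<le> n' \<Longrightarrow> A m n \<subseteq> A m' n'"
  obtains N where "\<And>m n. N \<le> m \<Longrightarrow> A m n = A N n"
proof -
  obtain N\<^sub>0 where N\<^sub>0: "\<And>m. N\<^sub>0 \<le> m \<Longrightarrow> A m m = A N\<^sub>0 N\<^sub>0"
    using ascending_chain_conditionD[OF acc, of "\<lambda>m. A m m"] P mono by (metis le_SucI order_refl)
  have "\<exists>M. \<forall>m\<ge>M. A m n = A M n" for n
    using ascending_chain_conditionD[OF acc, of "\<lambda>m. A m n"] P mono by (metis le_SucI order_refl)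
  then obtain M where M: "\<And>n m. M n \<le> m \<Longrightarrow> A m n = A (M n) n"
    by metis
  define N where "N = max N\<^sub>0 (Max (M ` {..N\<^sub>0}))"
  have "A m n = A N n" if "N \<le> m" for m n
  proof (cases "n \<le> N\<^sub>0")
    case True
    then have "M n \<le> N"
      by (auto simp: N_def intro: le_max_iff_disj[THEN iffD2] Max_ge)
    then show ?thesis
      using M[of n m] M[of n N] \<open>N \<le> m\<close> by simp
  next
    case False
    have "A m n \<subseteq> A (max n m) (max n m)"
      by (rule mono) auto
    also have "\<dots> = A N\<^sub>0 N\<^sub>0"
      using False by (intro N\<^sub>0) simp
    also have "\<dots> \<subseteq> A N n"
      using False by (intro mono) (auto simp: N_def)
    finally show ?thesis
      using mono[OF \<open>N \<le> m\<close> order_refl] by blast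
  qed
  then show thesis
    using that by blast
qed

lemma ascending_chain_condition_if_determined_by_invariants:
  fixes L :: "'b set \<Rightarrow> nat \<Rightarrow> 'a set"
  assumes acc: "ascending_chain_condition P"
    and P: "\<And>K n. Q K \<Longrightarrow> P (L K n)"
    and mono: "\<And>K K' n n'. K \<subseteq> K' \<Longrightarrow> n \<le> n' \<Longrightarrow> L K n \<subseteq> L K' n'"
    and determined: "\<And>K K'. Q K \<Longrightarrow> Q K' \<Longrightarrow> K \<subseteq> K' \<Longrightarrow> (\<And>n. L K n = L K' n) \<Longrightarrow> K = K'"
  shows "ascending_chain_condition Q"
  unfolding ascending_chain_condition_def
proof (intro allI impI)
  fix C :: "nat \<Rightarrow> _ set"
  assume "(\<forall>n. Q (C n)) \<and> (\<forall>n. C n \<subseteq> C (Suc n))"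
  then have Q: "\<And>n. Q (C n)" and C_mono: "\<And>m m'. m \<le> m' \<Longrightarrow> C m \<subseteq> C m'"
    using lift_Suc_mono_le[of C] by auto
  obtain N where "\<And>m n. N \<le> m \<Longrightarrow> L (C m) n = L (C N) n"
    by (rule ascending_chain_condition_doubly_indexed[OF acc, of "\<lambda>m n. L (C m) n"])
      (use P Q mono C_mono in blast)+
  then show "\<exists>N. \<forall>m\<ge>N. C m = C N"
    using determined Q C_mono by metis
qed

lemma
  assumes "nonassoc_ring S mul one" "x \<in> S"
  shows nonassoc_ring_mult_zero_left: "mul 0 x = 0"
    and nonassoc_ring_mult_zero_right: "mul x 0 = 0"
    and nonassoc_ring_mult_one_left: "mul one x = x"
    and nonassoc_ring_mult_one_right: "mul x one = x"
proof -
  have "mul (0 + 0) x = mul 0 x + mul 0 x" "mul x (0 + 0) = mul x 0 + mul x 0"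
    using assms unfolding nonassoc_ring_def by blast+
  then show "mul 0 x = 0" "mul x 0 = 0"
    by simp_all
  show "mul one x = x" "mul x one = x"
    using assms unfolding nonassoc_ring_def by blast+
qed

lemma spow_0 [simp]: "spow \<sigma> 0 = id"
  by (simp add: spow_def)

lemma spow_fixpoint:
  assumes "bij \<sigma>" "\<sigma> c = c"
  shows "spow \<sigma> k c = c"
proof -
  have "inv \<sigma> c = c"
    using assms by (metis bij_is_inj inv_f_f)
  moreover have "(f ^^ n) c = c" if "f c = c" for f :: "'a \<Rightarrow> 'a" and n
    using that by (induction n) auto
  ultimately show ?thesis
    using assms by (simp add: spow_def)
qed

lemma spow_inverse:
  assumes "bij \<sigma>"
  shows "spow \<sigma> (- k) (spow \<sigma> k x) = x"
  using inv_fn_o_fn_is_id[OF assms] fn_o_inv_fn_is_id[OF assms]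
  by (auto simp: spow_def fun_eq_iff)

lemma spow_eq_0_iff:
  assumes "bij \<sigma>" "\<sigma> 0 = 0"
  shows "spow \<sigma> k x = 0 \<longleftrightarrow> x = 0"
  using assms by (metis spow_fixpoint spow_inverse)

definition laurent_monom :: "'a::zero \<Rightarrow> int \<Rightarrow> int \<Rightarrow> 'a" where
  "laurent_monom c k = (\<lambda>i. if i = k then c else 0)"

lemma laurent_monom_in_carrier: "laurent_monom c k \<in> laurent_carrier"
proof -
  have "{i. laurent_monom c k i \<noteq> 0} \<subseteq> {k}"
    by (auto simp: laurent_monom_def)
  then show ?thesis
    unfolding laurent_carrier_def by (auto intro: finite_subset)
qed

lemma laurent_mult_monom_left:
  assumes "\<And>y. mul 0 y = 0"
  shows "laurent_mult mul \<sigma> (laurent_monom c k) g = (\<lambda>j. mul c (spow \<sigma> k (g (j - k))))"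
proof (cases "c = 0")
  case True
  then have "{m. laurent_monom c k m \<noteq> 0} = {}"
    by (simp add: laurent_monom_def)
  then show ?thesis
    using True assms by (simp add: laurent_mult_def)
next
  case False
  then have "{m. laurent_monom c k m \<noteq> 0} = {k}"
    by (auto simp: laurent_monom_def)
  then show ?thesis
    by (simp add: laurent_mult_def laurent_monom_def)
qed

lemma laurent_mult_monom_right:
  assumes "\<And>y. mul 0 y = 0" "\<And>y. mul y 0 = 0" "\<And>m. spow \<sigma> m 0 = 0"
    and "g \<in> laurent_carrier"
  shows "laurent_mult mul \<sigma> g (laurent_monom c k) = (\<lambda>j. mul (g (j - k)) (spow \<sigma> (j - k) c))"
proof
  fix j
  have "finite {m. g m \<noteq> 0}"
    using assms(4) by (simp add: laurent_carrier_def)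
  then have "laurent_mult mul \<sigma> g (laurent_monom c k) j
      = (\<Sum>m | g m \<noteq> 0. if m = j - k then mul (g m) (spow \<sigma> m c) else 0)"
    unfolding laurent_mult_def by (intro sum.cong) (auto simp: laurent_monom_def assms(2,3))
  also have "\<dots> = mul (g (j - k)) (spow \<sigma> (j - k) c)"
    using \<open>finite _\<close> assms(1) by (simp add: sum.delta)
  finally show "laurent_mult mul \<sigma> g (laurent_monom c k) j = mul (g (j - k)) (spow \<sigma> (j - k) c)" .
qed

definition trailing_coeffs :: "(int \<Rightarrow> 'a::zero) set \<Rightarrow> nat \<Rightarrow> 'a set" where
  "trailing_coeffs K n = {g 0 | g. g \<in> K \<and> {i. g i \<noteq> 0} \<subseteq> {0..int n}}"

lemma trailing_coeffs_mono: "K \<subseteq> K' \<Longrightarrow> n \<le> n' \<Longrightarrow> trailing_coeffs K n \<subseteq> trailing_coeffs K' n'"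
  unfolding trailing_coeffs_def by fastforce

lemma trailing_coeffs_closed_coeffwise:
  assumes "\<And>g. g \<in> K \<Longrightarrow> (\<lambda>j. \<psi> j (g j)) \<in> K" and "\<And>j. \<psi> j 0 = 0"
    and "x \<in> trailing_coeffs K n"
  shows "\<psi> 0 x \<in> trailing_coeffs K n"
proof -
  obtain g where g: "g \<in> K" "{i. g i \<noteq> 0} \<subseteq> {0..int n}" "x = g 0"
    using assms(3) unfolding trailing_coeffs_def by blast
  have "{i. \<psi> i (g i) \<noteq> 0} \<subseteq> {i. g i \<noteq> 0}"
    using assms(2) by auto
  then show ?thesis
    unfolding trailing_coeffs_def using assms(1) g
    by (intro CollectI exI[of _ "\<lambda>j. \<psi> j (g j)"]) auto
qed

lemma additive_subgroup_trailing_coeffs: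
  assumes "additive_subgroup K"
  shows "additive_subgroup (trailing_coeffs K n)"
  unfolding additive_subgroup_def
proof (intro conjI ballI)
  have "(0 :: int \<Rightarrow> 'a) \<in> K"
    using assms by (simp add: additive_subgroup_def)
  then show "0 \<in> trailing_coeffs K n"
    unfolding trailing_coeffs_def by (intro CollectI exI[of _ 0]) auto
next
  fix x y
  assume x: "x \<in> trailing_coeffs K n" and y: "y \<in> trailing_coeffs K n"
  obtain f where f: "f \<in> K" "{i. f i \<noteq> 0} \<subseteq> {0..int n}" "x = f 0"
    using x unfolding trailing_coeffs_def by blast
  obtain g where g: "g \<in> K" "{i. g i \<noteq> 0} \<subseteq> {0..int n}" "y = g 0"
    using y unfolding trailing_coeffs_def by blast
  have "f + g \<in> K"
    using assms f g by (simp add: additive_subgroup_def)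
  moreover have "{i. (f + g) i \<noteq> 0} \<subseteq> {i. f i \<noteq> 0} \<union> {i. g i \<noteq> 0}"
    by auto
  ultimately show "x + y \<in> trailing_coeffs K n"
    unfolding trailing_coeffs_def using f g by (intro CollectI exI[of _ "f + g"]) auto
  have "(\<lambda>j. - g j) \<in> K" if "g \<in> K" for g
  proof -
    have "- g \<in> K"
      using assms that by (simp add: additive_subgroup_def)
    then show ?thesis
      by (simp add: fun_Compl_def)
  qed
  then show "- x \<in> trailing_coeffs K n"
    using trailing_coeffs_closed_coeffwise[of K "\<lambda>_ x. - x", OF _ _ x] by simp
qed

text \<open>Multiplying by X^k on the left acts as \<open>twisted_shift (spow \<sigma>) k\<close>, on the right
  as \<open>twisted_shift (\<lambda>_ x. x) k\<close>.\<close>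
definition twisted_shift :: "(int \<Rightarrow> 'a \<Rightarrow> 'a) \<Rightarrow> int \<Rightarrow> (int \<Rightarrow> 'a) \<Rightarrow> int \<Rightarrow> 'a" where
  "twisted_shift \<tau> k g = (\<lambda>j. \<tau> k (g (j - k)))"

definition shift_invariant_subgroup :: "(int \<Rightarrow> 'a \<Rightarrow> 'a) \<Rightarrow> (int \<Rightarrow> 'a::ab_group_add) set \<Rightarrow> bool" where
  "shift_invariant_subgroup \<tau> K \<longleftrightarrow>
     additive_subgroup K \<and> K \<subseteq> laurent_carrier \<and> (\<forall>k. \<forall>g\<in>K. twisted_shift \<tau> k g \<in> K)"

lemma shift_invariant_subgroupD:
  assumes "shift_invariant_subgroup \<tau> K"
  shows "additive_subgroup K" "K \<subseteq> laurent_carrier" "g \<in> K \<Longrightarrow> twisted_shift \<tau> k g \<in> K"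
  using assms by (auto simp: shift_invariant_subgroup_def)

locale shift_twist =
  fixes \<tau> :: "int \<Rightarrow> 'a::ab_group_add \<Rightarrow> 'a"
  assumes twist_eq_0_iff [simp]: "\<tau> k x = 0 \<longleftrightarrow> x = 0"
    and twist_inverse [simp]: "\<tau> (- k) (\<tau> k x) = x"
begin

lemma twisted_shift_inverse [simp]: "twisted_shift \<tau> (- k) (twisted_shift \<tau> k g) = g"
  by (simp add: twisted_shift_def)

lemma twisted_shift_eq_0_iff [simp]: "twisted_shift \<tau> k g j = 0 \<longleftrightarrow> g (j - k) = 0"
  by (simp add: twisted_shift_def)

context
  fixes K K' :: "(int \<Rightarrow> 'a) set"
  assumes invariant: "shift_invariant_subgroup \<tau> K" "shift_invariant_subgroup \<tau> K'"
    and "K \<subseteq> K'"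
    and same_trailing_coeffs: "\<And>n. trailing_coeffs K n = trailing_coeffs K' n"
begin

text \<open>Subtract from g an element of K with the same constant term, then shift the
  difference, which vanishes in degree 0, one degree down.\<close>
lemma polynomial_mem_if_same_trailing_coeffs:
  assumes "g \<in> K'" "{i. g i \<noteq> 0} \<subseteq> {0..int n}"
  shows "g \<in> K"
  using assms
proof (induction n arbitrary: g rule: less_induct)
  case (less n)
  note subgroup = shift_invariant_subgroupD(1)[OF invariant(1)] shift_invariant_subgroupD(1)[OF invariant(2)]
  note shift_closed = shift_invariant_subgroupD(3)[OF invariant(1)] shift_invariant_subgroupD(3)[OF invariant(2)]
  have "g 0 \<in> trailing_coeffs K n"
    using less.prems same_trailing_coeffs[of n] unfolding trailing_coeffs_def by blast
  then obtain f where f: "f \<in> K" "{i. f i \<noteq> 0} \<subseteq> {0..int n}" "f 0 = g 0"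
    unfolding trailing_coeffs_def by auto
  define h where "h = g - f"
  have "f \<in> K'"
    using f(1) \<open>K \<subseteq> K'\<close> by blast
  then have "h \<in> K'"
    using less.prems(1) subgroup(2)
    unfolding h_def additive_subgroup_def by (metis diff_conv_add_uminus)
  have h_support: "{i. h i \<noteq> 0} \<subseteq> {1..int n}"
  proof
    fix i
    assume "i \<in> {i. h i \<noteq> 0}"
    then have "i \<noteq> 0" "g i \<noteq> 0 \<or> f i \<noteq> 0"
      using f(3) by (auto simp: h_def)
    then show "i \<in> {1..int n}"
      using f(2) less.prems(2) by auto
  qed
  have "h \<in> K"
  proof (cases "h = 0")
    case True
    then show ?thesis
      using subgroup(1) by (simp add: additive_subgroup_def)
  next
    case False
    then obtain i where "h i \<noteq> 0"
      by (auto simp: fun_eq_iff)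
    then have "n \<noteq> 0"
      using h_support by auto
    have "{i. twisted_shift \<tau> (- 1) h i \<noteq> 0} \<subseteq> {0..int (n - 1)}"
      using h_support \<open>n \<noteq> 0\<close> by auto
    then have "twisted_shift \<tau> (- 1) h \<in> K"
      using less.IH[of "n - 1"] shift_closed(2)[OF \<open>h \<in> K'\<close>] \<open>n \<noteq> 0\<close> by simp
    then show ?thesis
      using shift_closed(1)[of _ 1] by (metis twisted_shift_inverse minus_minus)
  qed
  then show "g \<in> K"
    using f(1) subgroup(1) unfolding h_def additive_subgroup_def by (metis diff_add_cancel)
qed

lemma eq_if_same_trailing_coeffs: "K = K'"
proof -
  have "g \<in> K" if "g \<in> K'" for g
  proof -
    have "finite {i. g i \<noteq> 0}"
      using that shift_invariant_subgroupD(2)[OF invariant(2)] by (auto simp: laurent_carrier_def)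
    then obtain b where b: "\<And>i. g i \<noteq> 0 \<Longrightarrow> \<bar>i\<bar> \<le> b"
      unfolding finite_int_iff_bounded_le by auto
    have "{i. twisted_shift \<tau> b g i \<noteq> 0} \<subseteq> {0..int (nat (2 * b))}"
    proof
      fix i
      assume "i \<in> {i. twisted_shift \<tau> b g i \<noteq> 0}"
      then have "\<bar>i - b\<bar> \<le> b"
        by (intro b) simp
      then show "i \<in> {0..int (nat (2 * b))}"
        by auto
    qed
    then have "twisted_shift \<tau> b g \<in> K"
      using polynomial_mem_if_same_trailing_coeffs shift_invariant_subgroupD(3)[OF invariant(2) that] by blast
    then have "twisted_shift \<tau> (- b) (twisted_shift \<tau> b g) \<in> K"
      by (rule shift_invariant_subgroupD(3)[OF invariant(1)])
    then show "g \<in> K"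
      by simp
  qed
  then show ?thesis
    using \<open>K \<subseteq> K'\<close> by blast
qed

end

end

lemma shift_invariant_subgroup_left_ideal:
  assumes R: "nonassoc_ring UNIV mul one"
    and K: "left_ideal laurent_carrier (laurent_mult mul \<sigma>) K"
  shows "shift_invariant_subgroup (spow \<sigma>) K"
proof -
  have "twisted_shift (spow \<sigma>) k g \<in> K" if "g \<in> K" for k g
  proof -
    have "laurent_mult mul \<sigma> (laurent_monom one k) g \<in> K"
      using K \<open>g \<in> K\<close> laurent_monom_in_carrier unfolding left_ideal_def by blast
    then show ?thesis
      using nonassoc_ring_mult_zero_left[OF R] nonassoc_ring_mult_one_left[OF R]
      by (simp add: laurent_mult_monom_left twisted_shift_def)
  qed
  then show ?thesis
    using K by (simp add: shift_invariant_subgroup_def left_ideal_def)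
qed

lemma left_ideal_trailing_coeffs:
  assumes R: "nonassoc_ring UNIV mul one"
    and K: "left_ideal laurent_carrier (laurent_mult mul \<sigma>) K"
  shows "left_ideal UNIV mul (trailing_coeffs K n)"
proof -
  have "(\<lambda>j. mul r (g j)) \<in> K" if "g \<in> K" for r g
  proof -
    have "laurent_mult mul \<sigma> (laurent_monom r 0) g \<in> K"
      using K \<open>g \<in> K\<close> laurent_monom_in_carrier unfolding left_ideal_def by blast
    then show ?thesis
      using nonassoc_ring_mult_zero_left[OF R] by (simp add: laurent_mult_monom_left)
  qed
  then have "mul r x \<in> trailing_coeffs K n" if "x \<in> trailing_coeffs K n" for r x
    using trailing_coeffs_closed_coeffwise[of K "\<lambda>_. mul r", OF _ _ that]
      nonassoc_ring_mult_zero_right[OF R] by simp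
  moreover have "additive_subgroup (trailing_coeffs K n)"
    using K additive_subgroup_trailing_coeffs unfolding left_ideal_def by blast
  ultimately show ?thesis
    unfolding left_ideal_def by blast
qed

lemma shift_invariant_subgroup_right_ideal:
  assumes R: "nonassoc_ring UNIV mul one"
    and \<sigma>: "\<And>m. spow \<sigma> m 0 = 0" "\<And>m. spow \<sigma> m one = one"
    and K: "right_ideal laurent_carrier (laurent_mult mul \<sigma>) K"
  shows "shift_invariant_subgroup (\<lambda>_ x. x) K"
proof -
  have "twisted_shift (\<lambda>_ x. x) k g \<in> K" if "g \<in> K" for k g
  proof -
    have "laurent_mult mul \<sigma> g (laurent_monom one k) \<in> K" and "g \<in> laurent_carrier"
      using K \<open>g \<in> K\<close> laurent_monom_in_carrier unfolding right_ideal_def by blast+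
    then show ?thesis
      using nonassoc_ring_mult_zero_left[OF R] nonassoc_ring_mult_zero_right[OF R]
        nonassoc_ring_mult_one_right[OF R]
      by (simp add: laurent_mult_monom_right \<sigma> twisted_shift_def)
  qed
  then show ?thesis
    using K by (simp add: shift_invariant_subgroup_def right_ideal_def)
qed

lemma right_ideal_trailing_coeffs:
  assumes R: "nonassoc_ring UNIV mul one" and \<sigma>: "\<And>m. spow \<sigma> m 0 = 0"
    and K: "right_ideal laurent_carrier (laurent_mult mul \<sigma>) K"
  shows "right_ideal UNIV mul (trailing_coeffs K n)"
proof -
  have "(\<lambda>j. mul (g j) (spow \<sigma> j r)) \<in> K" if "g \<in> K" for r g
  proof -
    have "laurent_mult mul \<sigma> g (laurent_monom r 0) \<in> K" and "g \<in> laurent_carrier"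
      using K \<open>g \<in> K\<close> laurent_monom_in_carrier unfolding right_ideal_def by blast+
    then show ?thesis
      using nonassoc_ring_mult_zero_left[OF R] nonassoc_ring_mult_zero_right[OF R]
      by (simp add: laurent_mult_monom_right \<sigma>)
  qed
  then have "mul x r \<in> trailing_coeffs K n" if "x \<in> trailing_coeffs K n" for r x
    using trailing_coeffs_closed_coeffwise[of K "\<lambda>j x. mul x (spow \<sigma> j r)", OF _ _ that]
      nonassoc_ring_mult_zero_left[OF R] by simp
  moreover have "additive_subgroup (trailing_coeffs K n)"
    using K additive_subgroup_trailing_coeffs unfolding right_ideal_def by blast
  ultimately show ?thesis
    unfolding right_ideal_def by blast
qed

lemma left_noetherian_skew_laurent:
  assumes R: "nonassoc_ring UNIV mul one" and "bij \<sigma>" "\<sigma> 0 = 0"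
    and "left_noetherian UNIV mul"
  shows "left_noetherian laurent_carrier (laurent_mult mul \<sigma>)"
proof -
  interpret shift_twist "spow \<sigma>"
    by unfold_locales (simp_all add: spow_eq_0_iff spow_inverse assms)
  show ?thesis
    unfolding left_noetherian_iff_acc
  proof (rule ascending_chain_condition_if_determined_by_invariants[where L = trailing_coeffs])
    show "ascending_chain_condition (left_ideal UNIV mul)"
      using assms(4) by (simp add: left_noetherian_iff_acc)
    show "left_ideal UNIV mul (trailing_coeffs K n)"
      if "left_ideal laurent_carrier (laurent_mult mul \<sigma>) K" for K n
      using R that by (rule left_ideal_trailing_coeffs)
    show "K = K'"
      if "left_ideal laurent_carrier (laurent_mult mul \<sigma>) K"
        and "left_ideal laurent_carrier (laurent_mult mul \<sigma>) K'"
        and "K \<subseteq> K'" and "\<And>n. trailing_coeffs K n = trailing_coeffs K' n" for K K'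
      using that by (rule eq_if_same_trailing_coeffs[OF shift_invariant_subgroup_left_ideal[OF R]
          shift_invariant_subgroup_left_ideal[OF R]])
  qed (rule trailing_coeffs_mono)
qed

lemma right_noetherian_skew_laurent:
  assumes R: "nonassoc_ring UNIV mul one" and "bij \<sigma>" "\<sigma> 0 = 0" "\<sigma> one = one"
    and "right_noetherian UNIV mul"
  shows "right_noetherian laurent_carrier (laurent_mult mul \<sigma>)"
proof -
  interpret shift_twist "\<lambda>_ x. x"
    by unfold_locales simp_all
  have \<sigma>: "spow \<sigma> m 0 = 0" "spow \<sigma> m one = one" for m
    using spow_fixpoint[OF \<open>bij \<sigma>\<close>] \<open>\<sigma> 0 = 0\<close> \<open>\<sigma> one = one\<close> by blast+
  show ?thesis
    unfolding right_noetherian_iff_acc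
  proof (rule ascending_chain_condition_if_determined_by_invariants[where L = trailing_coeffs])
    show "ascending_chain_condition (right_ideal UNIV mul)"
      using assms(5) by (simp add: right_noetherian_iff_acc)
    show "right_ideal UNIV mul (trailing_coeffs K n)"
      if "right_ideal laurent_carrier (laurent_mult mul \<sigma>) K" for K n
      using R \<sigma>(1) that by (rule right_ideal_trailing_coeffs)
    show "K = K'"
      if "right_ideal laurent_carrier (laurent_mult mul \<sigma>) K"
        and "right_ideal laurent_carrier (laurent_mult mul \<sigma>) K'"
        and "K \<subseteq> K'" and "\<And>n. trailing_coeffs K n = trailing_coeffs K' n" for K K'
      using that by (rule eq_if_same_trailing_coeffs[OF shift_invariant_subgroup_right_ideal[OF R \<sigma>]
          shift_invariant_subgroup_right_ideal[OF R \<sigma>]])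
  qed (rule trailing_coeffs_mono)
qed

theorem theorem6:
  fixes mul :: "'a::ab_group_add \<Rightarrow> 'a \<Rightarrow> 'a" and one :: 'a and \<sigma> :: "'a \<Rightarrow> 'a"
  assumes R: "nonassoc_ring UNIV mul one"
    and bij: "bij \<sigma>"
    and add: "\<forall>x y. \<sigma> (x + y) = \<sigma> x + \<sigma> y"
    and one: "\<sigma> one = one"
  shows "(left_noetherian UNIV mul \<longrightarrow> left_noetherian laurent_carrier (laurent_mult mul \<sigma>))
       \<and> (right_noetherian UNIV mul \<longrightarrow> right_noetherian laurent_carrier (laurent_mult mul \<sigma>))"
proof -
  have "\<sigma> 0 = 0"
    using add[rule_format, of 0 0] by simp
  then show ?thesis
    using left_noetherian_skew_laurent[OF R bij] right_noetherian_skew_laurent[OF R bij _ one] by blast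
qed

end
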